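(* Fix an integer $m\ge 3$. Then $\lim_{n\to\infty}|\tau_{C_m\odot\overline{K}_n}|=\infty$.
   Context: $C_m$ is the cycle of length $m$. An edge-magic labeling of a $(p,q)$-graph $G$ (with $p$ vertices and $q$ edges) is a bijection $f:V(G)\cup E(G)\to[1,p+q]$ such that $f(x)+f(xy)+f(y)$ equals a constant (the valence) for every edge $xy$. For a graph $H$, $\tau_H$ is the set of integers that are valences of edge-magic labelings of $H$. $G\odot\overline{K}_n$ is the graph obtained from $G$ by attaching $n$ new pendant vertices to each vertex of $G$. *)

theory Defs
  imports Main
begin

definition edge_magic_labeling ::
  "'v set \<Rightarrow> 'v set set \<Rightarrow> ('v + 'v set \<Rightarrow> nat) \<Rightarrow> nat \<Rightarrow> bool" where
  "edge_magic_labeling V E f k \<longleftrightarrow>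
     bij_betw f (Inl ` V \<union> Inr ` E) {1 .. card V + card E} \<and>
     (\<forall>x y. {x, y} \<in> E \<longrightarrow> x \<noteq> y \<longrightarrow> f (Inl x) + f (Inr {x, y}) + f (Inl y) = k)"

definition valences :: "'v set \<Rightarrow> 'v set set \<Rightarrow> nat set" where
  "valences V E = {k. \<exists>f. edge_magic_labeling V E f k}"

definition cycle_V :: "nat \<Rightarrow> nat set" where
  "cycle_V m = {..<m}"

definition cycle_E :: "nat \<Rightarrow> nat set set" where
  "cycle_E m = {{i, (i + 1) mod m} | i. i < m}"

text \<open>Corona with n pendant vertices at each vertex: old vertex v becomes Inl v,
the j-th pendant vertex attached to v is Inr (v, j).\<close>

definition corona_V :: "'v set \<Rightarrow> nat \<Rightarrow> ('v + 'v \<times> nat) set" where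
  "corona_V V n = Inl ` V \<union> Inr ` (V \<times> {..<n})"

definition corona_E :: "'v set \<Rightarrow> 'v set set \<Rightarrow> nat \<Rightarrow> ('v + 'v \<times> nat) set set" where
  "corona_E V E n = (\<lambda>e. Inl ` e) ` E \<union> {{Inl v, Inr (v, j)} | v j. v \<in> V \<and> j < n}"

end

theory Submission
  imports Defs
begin

text \<open>For every r0 with 2 \<le> r0 \<le> n the corona of C_m with n pendant vertices per
vertex has an edge-magic labeling of valence 2m(n + r0) + const, so it has at least
n - 1 valences. Such a labeling is built from an edge-magic labeling of C_m modulo 2m:
write every label in 1..2m(n+1) as 2m r + c + 1 with level r \<le> n and residue c < 2m.
The residue of a cycle vertex i+1 is given to cycle vertex i at one level and to the
n pendant vertices of i+1 at all other levels; the edge labels are then forced by the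
valence, and they fill the residue classes of the cycle edges in complementary
levels. The carries of the modular labeling (at most 2) are absorbed by the levels of
the cycle vertices, which is why r0 \<ge> 2 is needed. Modular labelings of C_m are
given explicitly, separately for m odd, m = 4, m = 4q + 2 and m = 4r + 4 with r \<ge> 1.\<close>

text \<open>Vertex i of C_m carries residue h i and edge {i, i+1} residue g i; together
they cover all 2m residues, and every edge sum is K modulo 2m with carry t i.\<close>

definition cycle_magic_mod :: "nat \<Rightarrow> (nat \<Rightarrow> nat) \<Rightarrow> (nat \<Rightarrow> nat) \<Rightarrow> (nat \<Rightarrow> nat) \<Rightarrow> nat \<Rightarrow> bool" where
  "cycle_magic_mod m h g t K \<longleftrightarrow>
     (\<forall>i<m. h i < 2*m \<and> g i < 2*m \<and> h i + g i + h (Suc i mod m) = K + 2*m*t i) \<and>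
     (\<forall>c<2*m. \<exists>i<m. c = h i \<or> c = g i)"

lemma cycle_magic_modI:
  assumes "\<And>i. i < m \<Longrightarrow> h i < 2*m \<and> g i < 2*m \<and> h i + g i + h (Suc i mod m) = K + 2*m*t i"
    and "\<And>c. c < 2*m \<Longrightarrow> \<exists>i<m. c = h i \<or> c = g i"
  shows "cycle_magic_mod m h g t K"
  using assms unfolding cycle_magic_mod_def by blast

lemma Suc_mod_Suc_mod_neq:
  fixes i m :: nat
  assumes "3 \<le> m" "i < m"
  shows "Suc (Suc i mod m) mod m \<noteq> i"
proof -
  have "Suc (Suc i mod m) mod m = (i + 2) mod m"
    by (simp add: mod_Suc_eq)
  also have "\<dots> = (if i + 2 < m then i + 2 else i + 2 - m)"
    using assms by (simp add: le_mod_geq)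
  finally show ?thesis using assms by auto
qed

lemma cycle_E_eq_image: "cycle_E m = (\<lambda>i. {i, Suc i mod m}) ` {..<m}"
  unfolding cycle_E_def by auto

lemma card_cycle_E:
  assumes "3 \<le> m"
  shows "card (cycle_E m) = m"
proof -
  have "inj_on (\<lambda>i. {i, Suc i mod m}) {..<m}"
  proof (rule inj_onI, rule ccontr)
    fix i j assume "i \<in> {..<m}" "j \<in> {..<m}" "{i, Suc i mod m} = {j, Suc j mod m}" "i \<noteq> j"
    then have "i = Suc j mod m" "j = Suc i mod m" "i < m"
      by (auto simp: doubleton_eq_iff)
    then show False using Suc_mod_Suc_mod_neq[OF assms] by metis
  qed
  then show ?thesis by (simp add: cycle_E_eq_image card_image)
qed

subsection \<open>Labeling the corona from a modular labeling of the cycle\<close>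

locale corona_construction =
  fixes m n r0 :: nat and h g t :: "nat \<Rightarrow> nat" and K :: nat
  assumes m_ge_3: "3 \<le> m" and magic: "cycle_magic_mod m h g t K"
    and r0_ge_2: "2 \<le> r0" and r0_le_n: "r0 \<le> n"
begin

definition nxt :: "nat \<Rightarrow> nat" where "nxt i = Suc i mod m"
definition prv :: "nat \<Rightarrow> nat" where "prv i = (i + m - 1) mod m"
definition level :: "nat \<Rightarrow> nat" where "level i = r0 - t i"
definition label_at :: "nat \<Rightarrow> nat \<Rightarrow> nat" where "label_at r c = 2*m*r + c + 1"
definition valence :: nat where "valence = 2*m*(n + r0) + 3 + K"

text \<open>The pendants of vertex i skip the level of cycle vertex prv i, which carries
the same residue h i.\<close>

definition pendant_level :: "nat \<Rightarrow> nat \<Rightarrow> nat" where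
  "pendant_level i j = (if j < level (prv i) then j else Suc j)"

fun vertex_label :: "nat + nat \<times> nat \<Rightarrow> nat" where
  "vertex_label (Inl i) = label_at (level i) (h (nxt i))"
| "vertex_label (Inr (i, j)) = label_at (pendant_level i j) (h i)"

text \<open>Edge labels are forced by the valence; the subtraction never truncates on edges
of the corona (see label_edge_sum).\<close>

fun label :: "(nat + nat \<times> nat) + (nat + nat \<times> nat) set \<Rightarrow> nat" where
  "label (Inl x) = vertex_label x"
| "label (Inr e) = valence - sum vertex_label e"

abbreviation "CV \<equiv> corona_V (cycle_V m) n"
abbreviation "CE \<equiv> corona_E (cycle_V m) (cycle_E m) n"
abbreviation "Dom \<equiv> Inl ` CV \<union> Inr ` CE"

lemma nxt_less: "nxt i < m"
  using m_ge_3 by (simp add: nxt_def)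

lemma prv_less: "prv i < m"
  using m_ge_3 by (simp add: prv_def)

lemma nxt_prv: "i < m \<Longrightarrow> nxt (prv i) = i"
proof -
  assume "i < m"
  have "nxt (prv i) = Suc (i + m - 1) mod m"
    by (simp add: nxt_def prv_def mod_Suc_eq)
  also have "Suc (i + m - 1) = i + m"
    using m_ge_3 by simp
  finally show ?thesis using \<open>i < m\<close> by simp
qed

lemma nxt_neq: "i < m \<Longrightarrow> nxt i \<noteq> i"
  using m_ge_3 by (cases "Suc i = m") (auto simp: nxt_def)

lemma magic_at: "i < m \<Longrightarrow> h i < 2*m \<and> g i < 2*m \<and> h i + g i + h (nxt i) = K + 2*m*t i"
  using magic by (simp add: cycle_magic_mod_def nxt_def)

lemma level_add_carry: "i < m \<Longrightarrow> level i + t i = r0"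
proof -
  assume "i < m"
  with magic_at[of i] magic_at[OF nxt_less[of i]] have "2*m*t i < 2*m*3"
    by linarith
  then have "t i \<le> 2" by simp
  then show ?thesis using r0_ge_2 by (simp add: level_def)
qed

lemma level_le: "level i \<le> n"
  using r0_le_n by (simp add: level_def)

lemma pendant_level_le: "j < n \<Longrightarrow> pendant_level i j \<le> n"
  by (simp add: pendant_level_def)

lemma label_at_mem: "r \<le> n \<Longrightarrow> c < 2*m \<Longrightarrow> label_at r c \<in> {1..2*m*(n+1)}"
proof -
  assume "r \<le> n" "c < 2*m"
  then have "2*m*r + c < 2*m*n + 2*m"
    using mult_le_mono2[of r n "2*m"] by linarith
  then show ?thesis by (simp add: label_at_def)
qed

lemma label_at_surj:
  assumes "l \<in> {1..2*m*(n+1)}"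
  obtains r c where "r \<le> n" "c < 2*m" "l = label_at r c"
proof
  have "l - 1 < (n+1) * (2*m)"
    using assms by (auto simp: mult.commute)
  then have "(l - 1) div (2*m) < n + 1"
    by (rule less_mult_imp_div_less)
  then show "(l - 1) div (2*m) \<le> n"
    by simp
  show "(l - 1) mod (2*m) < 2*m"
    using m_ge_3 by simp
  show "l = label_at ((l - 1) div (2*m)) ((l - 1) mod (2*m))"
    using assms div_mult_mod_eq[of "l - 1" "2*m"] by (simp add: label_at_def mult.commute)
qed

lemma label_at_sum:
  assumes "a + t' = r0" "b \<le> n" "c + c' + c'' = K + 2*m*t'"
  shows "label_at a c + label_at b c' + label_at (n - b) c'' = valence"
proof -
  have "2*m*a + 2*m*t' = 2*m*r0" "2*m*b + 2*m*(n - b) = 2*m*n"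
    using assms by (simp_all flip: add_mult_distrib2)
  then show ?thesis
    using assms(3) by (simp add: label_at_def valence_def algebra_simps)
qed

lemma cycle_edge_sum:
  "vertex_label (Inl i) + vertex_label (Inl (nxt i)) + label_at (n - level i) (g (nxt i)) = valence"
proof -
  have "label_at (level (nxt i)) (h (nxt (nxt i))) + label_at (level i) (h (nxt i))
      + label_at (n - level i) (g (nxt i)) = valence"
    using magic_at[OF nxt_less[of i]]
    by (intro label_at_sum[OF level_add_carry[OF nxt_less] level_le]) (simp add: add_ac)
  then show ?thesis by (simp add: add_ac)
qed

lemma pendant_edge_sum:
  "i < m \<Longrightarrow> j < n \<Longrightarrow>
    vertex_label (Inl i) + vertex_label (Inr (i, j)) + label_at (n - pendant_level i j) (g i) = valence"
  using magic_at[of i] label_at_sum[OF level_add_carry pendant_level_le] by simp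

lemma label_cycle_edge: "i < m \<Longrightarrow> label (Inr {Inl i, Inl (nxt i)}) = label_at (n - level i) (g (nxt i))"
  using cycle_edge_sum[of i] nxt_neq[of i] by simp

lemma label_pendant_edge:
  "i < m \<Longrightarrow> j < n \<Longrightarrow> label (Inr {Inl i, Inr (i, j)}) = label_at (n - pendant_level i j) (g i)"
  using pendant_edge_sum[of i j] by simp

lemma CV_eq: "CV = Inl ` {..<m} \<union> Inr ` ({..<m} \<times> {..<n})"
  by (simp add: corona_V_def cycle_V_def)

lemma CE_eq:
  "CE = (\<lambda>i. {Inl i, Inl (nxt i)}) ` {..<m} \<union> (\<lambda>(i, j). {Inl i, Inr (i, j)}) ` ({..<m} \<times> {..<n})"
proof -
  have "{{Inl v, Inr (v, j)} |v j. v \<in> cycle_V m \<and> j < n} = (\<lambda>(i, j). {Inl i, Inr (i, j)}) ` ({..<m} \<times> {..<n})"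
    by (auto simp: cycle_V_def)
  then show ?thesis
    by (simp add: corona_E_def cycle_E_eq_image image_image nxt_def)
qed

lemma card_CV: "card CV = m + m*n"
  unfolding CV_eq by (subst card_Un_disjoint) (auto simp: card_image card_cartesian_product)

lemma card_CE: "card CE = m + m*n"
proof -
  have "card ((\<lambda>e. Inl ` e :: (nat + nat \<times> nat) set) ` cycle_E m) = m"
    using card_cycle_E[OF m_ge_3] by (subst card_image) (auto intro: inj_onI simp: inj_image_eq_iff)
  then have "card ((\<lambda>i. {Inl i, Inl (nxt i)}) ` {..<m} :: (nat + nat \<times> nat) set set) = m"
    by (simp add: cycle_E_eq_image image_image nxt_def)
  moreover have "inj_on (\<lambda>(i, j). {Inl i, Inr (i, j)} :: (nat + nat \<times> nat) set) ({..<m} \<times> {..<n})"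
    by (rule inj_onI) (auto simp: doubleton_eq_iff)
  ultimately show ?thesis
    unfolding CE_eq
    by (subst card_Un_disjoint) (auto simp: card_image card_cartesian_product doubleton_eq_iff)
qed

lemma label_mem: "x \<in> Dom \<Longrightarrow> label x \<in> {1..2*m*(n+1)}"
  unfolding CV_eq CE_eq
  using label_at_mem[OF level_le] label_at_mem[OF pendant_level_le] label_at_mem[OF diff_le_self]
    magic_at nxt_less label_cycle_edge label_pendant_edge
  by auto

lemma pendant_level_surj:
  assumes "r \<le> n" "r \<noteq> level (prv i)"
  shows "\<exists>j<n. pendant_level i j = r"
proof (cases "r < level (prv i)")
  case True
  then show ?thesis
    using level_le[of "prv i"] by (auto simp: pendant_level_def)
next
  case False
  then show ?thesis
    using assms by (auto simp: pendant_level_def intro!: exI[of _ "r - 1"])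
qed

lemma vertex_residue_covered:
  assumes "i < m" "r \<le> n"
  shows "label_at r (h i) \<in> label ` Dom"
proof (cases "r = level (prv i)")
  case True
  then have "label (Inl (Inl (prv i))) = label_at r (h i)"
    using nxt_prv[OF assms(1)] by simp
  moreover have "Inl (Inl (prv i)) \<in> Dom"
    using prv_less by (simp add: CV_eq)
  ultimately show ?thesis by (metis image_eqI)
next
  case False
  then obtain j where "j < n" "pendant_level i j = r"
    using pendant_level_surj assms(2) by blast
  moreover have "Inl (Inr (i, j)) \<in> Dom"
    using assms \<open>j < n\<close> by (simp add: CV_eq)
  ultimately show ?thesis by (metis image_eqI label.simps(1) vertex_label.simps(2))
qed

lemma edge_residue_covered:
  assumes "i < m" "r \<le> n"
  shows "label_at r (g i) \<in> label ` Dom"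
proof (cases "n - r = level (prv i)")
  case True
  then have "n - level (prv i) = r"
    using assms(2) by simp
  then have "label (Inr {Inl (prv i), Inl (nxt (prv i))}) = label_at r (g i)"
    using label_cycle_edge[OF prv_less[of i]] nxt_prv[OF assms(1)] by simp
  moreover have "Inr {Inl (prv i), Inl (nxt (prv i))} \<in> Dom"
    using prv_less by (simp add: CE_eq)
  ultimately show ?thesis by (metis image_eqI)
next
  case False
  then obtain j where "j < n" "pendant_level i j = n - r"
    using pendant_level_surj[of "n - r"] by auto
  have "{Inl i, Inr (i, j)} \<in> (\<lambda>(i, j). {Inl i, Inr (i, j)}) ` ({..<m} \<times> {..<n})"
    using assms \<open>j < n\<close> by (intro rev_image_eqI[of "(i, j)"]) auto
  then have "Inr {Inl i, Inr (i, j)} \<in> Dom"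
    by (simp add: CE_eq)
  moreover have "label (Inr {Inl i, Inr (i, j)}) = label_at (n - pendant_level i j) (g i)"
    using assms(1) \<open>j < n\<close> by (rule label_pendant_edge)
  moreover have "n - pendant_level i j = r"
    using \<open>pendant_level i j = n - r\<close> assms(2) by simp
  ultimately show ?thesis by (metis image_eqI)
qed

lemma label_image: "label ` Dom = {1..2*m*(n+1)}"
proof
  show "label ` Dom \<subseteq> {1..2*m*(n+1)}"
    using label_mem by blast
  show "{1..2*m*(n+1)} \<subseteq> label ` Dom"
  proof
    fix l assume "l \<in> {1..2*m*(n+1)}"
    then obtain r c where "r \<le> n" "c < 2*m" "l = label_at r c"
      using label_at_surj by blast
    moreover obtain i where "i < m" "c = h i \<or> c = g i"
      using magic \<open>c < 2*m\<close> by (auto simp: cycle_magic_mod_def)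
    ultimately show "l \<in> label ` Dom"
      using vertex_residue_covered edge_residue_covered by blast
  qed
qed

lemma label_bij: "bij_betw label Dom {1..card CV + card CE}"
proof -
  have "card CV + card CE = 2*m*(n+1)"
    by (simp add: card_CV card_CE algebra_simps)
  moreover have "card Dom = card CV + card CE"
    by (subst card_Un_disjoint) (auto simp: CV_eq CE_eq card_image)
  moreover have "finite Dom"
    by (simp add: CV_eq CE_eq)
  ultimately have "inj_on label Dom"
    by (metis eq_card_imp_inj_on label_image card_atLeastAtMost diff_Suc_1)
  then show ?thesis
    unfolding bij_betw_def \<open>card CV + card CE = 2*m*(n+1)\<close> using label_image by blast
qed

lemma label_edge_sum:
  assumes "{x, y} \<in> CE" "x \<noteq> y"
  shows "label (Inl x) + label (Inr {x, y}) + label (Inl y) = valence"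
proof -
  from assms(1) consider (cycle) i where "i < m" "{x, y} = {Inl i, Inl (nxt i)}"
    | (pendant) i j where "i < m" "j < n" "{x, y} = {Inl i, Inr (i, j)}"
    unfolding CE_eq by auto
  then have "vertex_label x + vertex_label y \<le> valence"
  proof cases
    case cycle
    then have "vertex_label x + vertex_label y = vertex_label (Inl i) + vertex_label (Inl (nxt i))"
      by (auto simp: doubleton_eq_iff)
    then show ?thesis using cycle_edge_sum[of i] by linarith
  next
    case pendant
    then have "vertex_label x + vertex_label y = vertex_label (Inl i) + vertex_label (Inr (i, j))"
      by (auto simp: doubleton_eq_iff)
    then show ?thesis using pendant_edge_sum[OF pendant(1,2)] by linarith
  qed
  moreover have "label (Inr {x, y}) = valence - (vertex_label x + vertex_label y)"
    using assms(2) by simp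
  ultimately show ?thesis by simp
qed

lemma valence_mem_valences: "valence \<in> valences CV CE"
proof -
  have "edge_magic_labeling CV CE label valence"
    using label_bij label_edge_sum by (simp add: edge_magic_labeling_def)
  then show ?thesis
    unfolding valences_def by blast
qed

end

subsection \<open>Modular labelings of cycles\<close>

lemma covered_by_vertex: "w < m \<Longrightarrow> h w = c \<Longrightarrow> \<exists>i<m. c = h i \<or> c = g i"
  by blast

lemma covered_by_edge: "w < m \<Longrightarrow> g w = c \<Longrightarrow> \<exists>i<m. c = h i \<or> c = g i"
  by blast

lemma nat_even_odd_cases [case_names even odd]:
  fixes i :: nat
  obtains a where "i = 2*a" | a where "i = 2*a + 1"
  by (metis oddE evenE)

lemma Suc_mod_if: "i < m \<Longrightarrow> Suc i mod m = (if Suc i = m then 0 else Suc i)"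
  by auto

definition vtx_odd :: "nat \<Rightarrow> nat \<Rightarrow> nat" where
  "vtx_odd q i = (if even i then i div 2 else q + 1 + i div 2)"

definition edge_odd :: "nat \<Rightarrow> nat \<Rightarrow> nat" where
  "edge_odd q i = (if i = 2*q then 4*q + 1 else 4*q - i)"

lemma cycle_odd_sums:
  assumes "1 \<le> q" "i < 2*q + 1"
  shows "vtx_odd q i + edge_odd q i + vtx_odd q (Suc i mod (2*q + 1)) = q - 1 + 2*(2*q + 1)"
proof (cases i rule: nat_even_odd_cases)
  case (even a)
  then show ?thesis
    using assms by (cases "a = q") (auto simp: vtx_odd_def edge_odd_def)
next
  case (odd a)
  then have "Suc i mod (2*q + 1) = 2*(a + 1)"
    using assms by simp
  then show ?thesis
    using assms odd by (auto simp: vtx_odd_def edge_odd_def)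
qed

lemma cycle_odd_cover:
  assumes "1 \<le> q" "c < 2*(2*q + 1)"
  shows "\<exists>i<2*q + 1. c = vtx_odd q i \<or> c = edge_odd q i"
proof -
  consider "c \<le> q" | "q < c" "c \<le> 2*q" | "c = 4*q + 1" | "2*q < c" "c \<le> 4*q"
    using assms by force
  then show ?thesis
  proof cases
    case 1
    then show ?thesis by (intro covered_by_vertex[of "2*c"]) (auto simp: vtx_odd_def)
  next
    case 2
    then show ?thesis by (intro covered_by_vertex[of "2*(c - q - 1) + 1"]) (auto simp: vtx_odd_def)
  next
    case 3
    then show ?thesis by (intro covered_by_edge[of "2*q"]) (auto simp: edge_odd_def)
  next
    case 4
    then show ?thesis by (intro covered_by_edge[of "4*q - c"]) (auto simp: edge_odd_def)
  qed
qed

lemma cycle_magic_mod_odd: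
  assumes "1 \<le> q"
  shows "cycle_magic_mod (2*q + 1) (vtx_odd q) (edge_odd q) (\<lambda>_. 1) (q - 1)"
proof (rule cycle_magic_modI)
  fix i assume i: "i < 2*q + 1"
  have "vtx_odd q i < 2*(2*q + 1)" "edge_odd q i < 2*(2*q + 1)"
    using i assms by (auto simp: vtx_odd_def edge_odd_def)
  with cycle_odd_sums[OF assms i]
  show "vtx_odd q i < 2*(2*q + 1) \<and> edge_odd q i < 2*(2*q + 1) \<and>
      vtx_odd q i + edge_odd q i + vtx_odd q (Suc i mod (2*q + 1)) = q - 1 + 2*(2*q + 1)*1"
    by simp
qed (rule cycle_odd_cover[OF assms])

definition vtx_4q2 :: "nat \<Rightarrow> nat \<Rightarrow> nat" where
  "vtx_4q2 q i =
     (if even i then (if i = 0 then 0 else if i div 2 \<le> q then 2*q + 1 - i div 2 else 4*q + 2 - i div 2)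
      else (if i div 2 \<le> q then 4*q + 2 - i div 2 else 2*q + 1 - i div 2))"

definition edge_4q2 :: "nat \<Rightarrow> nat \<Rightarrow> nat" where
  "edge_4q2 q i =
     (if i = 0 then 6*q + 4 else if i = 2*q + 1 then 4*q + 3 else if i = 4*q + 1 then 2*q + 1
      else 4*q + 3 + i)"

definition carry_4q2 :: "nat \<Rightarrow> nat \<Rightarrow> nat" where
  "carry_4q2 q i = (if i = 4*q + 1 then 0 else 1)"

lemma cycle_4q2_sums:
  assumes "1 \<le> q" "i < 4*q + 2"
  shows "vtx_4q2 q i + edge_4q2 q i + vtx_4q2 q (Suc i mod (4*q + 2)) = 2*q + 2 + 2*(4*q + 2)*carry_4q2 q i"
proof (cases i rule: nat_even_odd_cases)
  case (even a)
  then have "Suc i mod (4*q + 2) = 2*a + 1"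
    using assms by (subst mod_less) presburger+
  then show ?thesis
    using assms even by (auto simp: vtx_4q2_def edge_4q2_def carry_4q2_def)
next
  case (odd a)
  then show ?thesis
    using assms by (auto simp: vtx_4q2_def edge_4q2_def carry_4q2_def Suc_mod_if)
qed

lemma cycle_4q2_cover:
  assumes "1 \<le> q" "c < 2*(4*q + 2)"
  shows "\<exists>i<4*q + 2. c = vtx_4q2 q i \<or> c = edge_4q2 q i"
proof -
  consider "c = 0" | "1 \<le> c" "c \<le> q" | "q < c" "c \<le> 2*q" | "c = 2*q + 1" | "2*q + 1 < c" "c \<le> 3*q + 1"
    | "3*q + 1 < c" "c \<le> 4*q + 2" | "c = 4*q + 3" | "c = 6*q + 4" | "4*q + 3 < c" "c \<noteq> 6*q + 4"
    by force
  then show ?thesis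
  proof cases
    case 1
    then show ?thesis using assms by (intro covered_by_vertex[of 0]) (auto simp: vtx_4q2_def)
  next
    case 2
    then show ?thesis using assms by (intro covered_by_vertex[of "2*(2*q + 1 - c) + 1"]) (auto simp: vtx_4q2_def)
  next
    case 3
    then show ?thesis using assms by (intro covered_by_vertex[of "2*(2*q + 1 - c)"]) (auto simp: vtx_4q2_def)
  next
    case 4
    then show ?thesis using assms by (intro covered_by_edge[of "4*q + 1"]) (auto simp: edge_4q2_def)
  next
    case 5
    then show ?thesis using assms by (intro covered_by_vertex[of "2*(4*q + 2 - c)"]) (auto simp: vtx_4q2_def)
  next
    case 6
    then show ?thesis using assms by (intro covered_by_vertex[of "2*(4*q + 2 - c) + 1"]) (auto simp: vtx_4q2_def)
  next
    case 7
    then show ?thesis using assms by (intro covered_by_edge[of "2*q + 1"]) (auto simp: edge_4q2_def)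
  next
    case 8
    then show ?thesis using assms by (intro covered_by_edge[of 0]) (auto simp: edge_4q2_def)
  next
    case 9
    then show ?thesis using assms by (intro covered_by_edge[of "c - 4*q - 3"]) (auto simp: edge_4q2_def)
  qed
qed

lemma cycle_magic_mod_4q2:
  assumes "1 \<le> q"
  shows "cycle_magic_mod (4*q + 2) (vtx_4q2 q) (edge_4q2 q) (carry_4q2 q) (2*q + 2)"
proof (rule cycle_magic_modI)
  fix i assume i: "i < 4*q + 2"
  have "vtx_4q2 q i < 2*(4*q + 2)" "edge_4q2 q i < 2*(4*q + 2)"
    using i assms by (auto simp: vtx_4q2_def edge_4q2_def)
  with cycle_4q2_sums[OF assms i]
  show "vtx_4q2 q i < 2*(4*q + 2) \<and> edge_4q2 q i < 2*(4*q + 2) \<and>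
      vtx_4q2 q i + edge_4q2 q i + vtx_4q2 q (Suc i mod (4*q + 2)) = 2*q + 2 + 2*(4*q + 2)*carry_4q2 q i"
    by simp
qed (rule cycle_4q2_cover[OF assms])

definition vtx_4r4 :: "nat \<Rightarrow> nat \<Rightarrow> nat" where
  "vtx_4r4 r i =
     (if even i then i div 2
      else if i = 1 then 4*r + 1 else if i \<le> 2*r + 1 then 6*r + 3 + i div 2
      else if i = 2*r + 3 then 4*r + 2 else 6*r + 4 + i div 2)"

definition edge_4r4 :: "nat \<Rightarrow> nat \<Rightarrow> nat" where
  "edge_4r4 r i =
     (if i = 0 then 8*r + 7 else if i = 1 then 8*r + 6 else if i \<le> 2*r + 1 then 6*r + 5 - i
      else if i = 2*r + 2 then 7*r + 5 else if i = 2*r + 3 then 7*r + 4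
      else if i = 4*r + 3 then 4*r + 3 else 6*r + 4 - i)"

lemma cycle_4r4_sums:
  assumes "1 \<le> r" "i < 4*r + 4"
  shows "vtx_4r4 r i + edge_4r4 r i + vtx_4r4 r (Suc i mod (4*r + 4)) = 4*r + 2*(4*r + 4)"
proof (cases i rule: nat_even_odd_cases)
  case (even a)
  then have "Suc i mod (4*r + 4) = 2*a + 1"
    using assms by (subst mod_less) presburger+
  then show ?thesis
    using assms even by (auto simp: vtx_4r4_def edge_4r4_def) presburger+
next
  case (odd a)
  then show ?thesis
    using assms by (auto simp: vtx_4r4_def edge_4r4_def Suc_mod_if)
qed

lemma cycle_4r4_cover:
  assumes "1 \<le> r" "c < 2*(4*r + 4)"
  shows "\<exists>i<4*r + 4. c = vtx_4r4 r i \<or> c = edge_4r4 r i"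
proof -
  consider "c \<le> 2*r + 1" | "2*r + 1 < c" "c \<le> 4*r" | "c = 4*r + 1" | "c = 4*r + 2" | "c = 4*r + 3"
    | "4*r + 3 < c" "c \<le> 6*r + 3" | "6*r + 3 < c" "c \<le> 7*r + 3" | "c = 7*r + 4" | "c = 7*r + 5"
    | "7*r + 5 < c" "c \<le> 8*r + 5" | "c = 8*r + 6" | "c = 8*r + 7"
    using assms by force
  then show ?thesis
  proof cases
    case 1
    then show ?thesis using assms by (intro covered_by_vertex[of "2*c"]) (auto simp: vtx_4r4_def)
  next
    case 2
    then show ?thesis using assms by (intro covered_by_edge[of "6*r + 4 - c"]) (auto simp: edge_4r4_def)
  next
    case 3
    then show ?thesis using assms by (intro covered_by_vertex[of 1]) (auto simp: vtx_4r4_def)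
  next
    case 4
    then show ?thesis using assms by (intro covered_by_vertex[of "2*r + 3"]) (auto simp: vtx_4r4_def)
  next
    case 5
    then show ?thesis using assms by (intro covered_by_edge[of "4*r + 3"]) (auto simp: edge_4r4_def)
  next
    case 6
    then show ?thesis using assms by (intro covered_by_edge[of "6*r + 5 - c"]) (auto simp: edge_4r4_def)
  next
    case 7
    then show ?thesis using assms by (intro covered_by_vertex[of "2*(c - 6*r - 3) + 1"]) (auto simp: vtx_4r4_def)
  next
    case 8
    then show ?thesis using assms by (intro covered_by_edge[of "2*r + 3"]) (auto simp: edge_4r4_def)
  next
    case 9
    then show ?thesis using assms by (intro covered_by_edge[of "2*r + 2"]) (auto simp: edge_4r4_def)
  next
    case 10
    then show ?thesis using assms by (intro covered_by_vertex[of "2*(c - 6*r - 4) + 1"]) (auto simp: vtx_4r4_def)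
  next
    case 11
    then show ?thesis using assms by (intro covered_by_edge[of 1]) (auto simp: edge_4r4_def)
  next
    case 12
    then show ?thesis using assms by (intro covered_by_edge[of 0]) (auto simp: edge_4r4_def)
  qed
qed

lemma cycle_magic_mod_4r4:
  assumes "1 \<le> r"
  shows "cycle_magic_mod (4*r + 4) (vtx_4r4 r) (edge_4r4 r) (\<lambda>_. 1) (4*r)"
proof (rule cycle_magic_modI)
  fix i assume i: "i < 4*r + 4"
  have "vtx_4r4 r i < 2*(4*r + 4)" "edge_4r4 r i < 2*(4*r + 4)"
    using i assms by (auto simp: vtx_4r4_def edge_4r4_def)
  with cycle_4r4_sums[OF assms i]
  show "vtx_4r4 r i < 2*(4*r + 4) \<and> edge_4r4 r i < 2*(4*r + 4) \<and>
      vtx_4r4 r i + edge_4r4 r i + vtx_4r4 r (Suc i mod (4*r + 4)) = 4*r + 2*(4*r + 4)*1"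
    by simp
qed (rule cycle_4r4_cover[OF assms])

definition vtx_C4 :: "nat \<Rightarrow> nat" where "vtx_C4 i = [0, 2, 1, 5] ! i"
definition edge_C4 :: "nat \<Rightarrow> nat" where "edge_C4 i = [7, 6, 3, 4] ! i"

lemma cycle_magic_mod_C4: "cycle_magic_mod 4 vtx_C4 edge_C4 (\<lambda>_. 1) 1"
proof (rule cycle_magic_modI)
  fix i :: nat assume "i < 4"
  then consider "i = 0" | "i = 1" | "i = 2" | "i = 3" by force
  then show "vtx_C4 i < 2*4 \<and> edge_C4 i < 2*4 \<and> vtx_C4 i + edge_C4 i + vtx_C4 (Suc i mod 4) = 1 + 2*4*1"
    by cases (simp_all add: vtx_C4_def edge_C4_def)
next
  fix c :: nat assume "c < 2*4"
  then consider "c = 0" | "c = 1" | "c = 2" | "c = 3" | "c = 4" | "c = 5" | "c = 6" | "c = 7" by force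
  then show "\<exists>i<4. c = vtx_C4 i \<or> c = edge_C4 i"
    by cases (auto simp: vtx_C4_def edge_C4_def intro: exI[of _ 0] exI[of _ 1] exI[of _ 2] exI[of _ 3])
qed

lemma cycle_magic_mod_exists:
  assumes "3 \<le> m"
  obtains h g t K where "cycle_magic_mod m h g t K"
proof -
  have "(\<exists>q. m = 2*q + 1 \<and> 1 \<le> q) \<or> m = 4 \<or> (\<exists>q. m = 4*q + 2 \<and> 1 \<le> q) \<or> (\<exists>r. m = 4*r + 4 \<and> 1 \<le> r)"
    using assms by presburger
  then show ?thesis
    by (elim disjE exE conjE)
      (use that cycle_magic_mod_odd cycle_magic_mod_C4 cycle_magic_mod_4q2 cycle_magic_mod_4r4 in blast)+
qed

subsection \<open>Counting valences\<close>

lemma valences_subset_atMost: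
  assumes "{x, y} \<in> E" "x \<noteq> y" "x \<in> V" "y \<in> V"
  shows "valences V E \<subseteq> {..3*(card V + card E)}"
proof
  fix k assume "k \<in> valences V E"
  then obtain f where bij: "bij_betw f (Inl ` V \<union> Inr ` E) {1 .. card V + card E}"
    and "f (Inl x) + f (Inr {x, y}) + f (Inl y) = k"
    using assms(1,2) unfolding valences_def edge_magic_labeling_def by blast
  moreover have "f (Inl x) \<le> card V + card E" "f (Inl y) \<le> card V + card E"
      "f (Inr {x, y}) \<le> card V + card E"
    using bij_betw_apply[OF bij] assms(1,3,4) by fastforce+
  ultimately show "k \<in> {..3*(card V + card E)}"
    by simp
qed

lemma finite_valences_corona_cycle:
  assumes "3 \<le> m"
  shows "finite (valences (corona_V (cycle_V m) n) (corona_E (cycle_V m) (cycle_E m) n))"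
proof -
  have "{0, 1} \<in> cycle_E m"
    using assms by (auto simp: cycle_E_def intro!: exI[of _ 0])
  then have "{Inl 0, Inl 1} \<in> corona_E (cycle_V m) (cycle_E m) n"
    unfolding corona_E_def by (metis (no_types, lifting) UnI1 image_empty image_eqI image_insert)
  moreover have "Inl 0 \<in> corona_V (cycle_V m) n" "Inl 1 \<in> corona_V (cycle_V m) n"
    using assms by (auto simp: corona_V_def cycle_V_def)
  ultimately show ?thesis
    by (auto intro: finite_subset[OF valences_subset_atMost])
qed

lemma card_valences_corona_cycle_ge:
  assumes "3 \<le> m"
  shows "n - 1 \<le> card (valences (corona_V (cycle_V m) n) (corona_E (cycle_V m) (cycle_E m) n))"
proof -
  obtain h g t K where magic: "cycle_magic_mod m h g t K"
    using cycle_magic_mod_exists[OF assms] .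
  let ?valence = "\<lambda>r0. 2*m*(n + r0) + 3 + K"
  have "?valence ` {2..n} \<subseteq> valences (corona_V (cycle_V m) n) (corona_E (cycle_V m) (cycle_E m) n)"
  proof
    fix k assume "k \<in> ?valence ` {2..n}"
    then obtain r0 where "2 \<le> r0" "r0 \<le> n" "k = ?valence r0"
      by auto
    then interpret corona_construction m n r0 h g t K
      using assms magic by unfold_locales
    show "k \<in> valences CV CE"
      using valence_mem_valences \<open>k = ?valence r0\<close> by (simp add: valence_def)
  qed
  moreover have "card (?valence ` {2..n}) = n - 1"
  proof -
    have "inj_on ?valence {2..n}"
      using assms by (intro inj_onI) simp
    then show ?thesis
      using card_image by fastforce
  qed
  ultimately show ?thesis
    using card_mono[OF finite_valences_corona_cycle[OF assms]] by metis
qed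

theorem mainTheorem5:
  fixes m :: nat
  assumes "m \<ge> 3"
  shows "filterlim
           (\<lambda>n. card (valences (corona_V (cycle_V m) n) (corona_E (cycle_V m) (cycle_E m) n)))
           at_top sequentially"
  by (rule filterlim_at_top_mono[OF filterlim_minus_const_nat_at_top[of 1]])
    (intro always_eventually allI card_valences_corona_cycle_ge[OF assms])

end
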